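(* Let $\alpha\in(0,2]$, $c>0$, $a>0$. The centered Gaussian process $\{G^{\alpha,c,a}(s):s\in[0,\infty)\}$ with covariance $\mathrm{Cov}(G^{\alpha,c,a}(s),G^{\alpha,c,a}(r))=\frac12\big(f^{\alpha,c,a}(s)+f^{\alpha,c,a}(r)-f^{\alpha,c,a}(|s-r|)\big)$ is non-Markovian.
   Context: Define $f^{\alpha,c,a}(0)=0$ and for $s>0$, $f^{\alpha,c,a}(s)=\frac{4s}{a\pi}\int_0^\infty\frac{\sin^2(u/2)}{u^2}(1-e^{-2c(u/s)^\alpha})\,\mathrm{d}u$. *)

theory Defs
  imports "HOL-Probability.Probability"
begin

text \<open>The function f^{alpha,c,a}: f(0) = 0 and for s > 0
  f(s) = 4s/(a pi) * int_0^infty sin^2(u/2)/u^2 * (1 - exp(-2c (u/s)^alpha)) du.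
  (Values for s < 0 are never used; we set them to 0.)\<close>
definition fac :: "real \<Rightarrow> real \<Rightarrow> real \<Rightarrow> real \<Rightarrow> real" where
  "fac \<alpha> c a s = (if s \<le> 0 then 0 else
     4 * s / (a * pi) *
     (LBINT u:{0<..}. (sin (u / 2))\<^sup>2 / u\<^sup>2 * (1 - exp (- 2 * c * (u / s) powr \<alpha>))))"

definition Kac :: "real \<Rightarrow> real \<Rightarrow> real \<Rightarrow> real \<Rightarrow> real \<Rightarrow> real" where
  "Kac \<alpha> c a s r = (fac \<alpha> c a s + fac \<alpha> c a r - fac \<alpha> c a \<bar>s - r\<bar>) / 2"

text \<open>X (indexed by [0,oo)) is a centered Gaussian process on M with covariance K:
  each X t is a real random variable, and every finite linear combination
  sum_{t in I} w t * X t has the centered normal law with variance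
  sum_{s,t} w s w t K s t (expressed through its characteristic function,
  which also covers the degenerate case of variance 0).\<close>
definition centered_gaussian_process ::
  "'a measure \<Rightarrow> (real \<Rightarrow> 'a \<Rightarrow> real) \<Rightarrow> (real \<Rightarrow> real \<Rightarrow> real) \<Rightarrow> bool" where
  "centered_gaussian_process M X K \<longleftrightarrow>
     (\<forall>t\<ge>0. X t \<in> borel_measurable M) \<and>
     (\<forall>I w \<theta>. finite I \<longrightarrow> I \<subseteq> {0..} \<longrightarrow>
        char (distr M borel (\<lambda>\<omega>. \<Sum>t\<in>I. w t * X t \<omega>)) \<theta> =
        exp (complex_of_real (- (\<theta>\<^sup>2 / 2) * (\<Sum>s\<in>I. \<Sum>t\<in>I. w s * w t * K s t))))"

definition nat_filtration :: "'a measure \<Rightarrow> (real \<Rightarrow> 'a \<Rightarrow> real) \<Rightarrow> real \<Rightarrow> 'a measure" where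
  "nat_filtration M X s = sigma (space M)
     (\<Union>r\<in>{0..s}. {X r -` A \<inter> space M | A. A \<in> sets borel})"

definition gen_sigma :: "'a measure \<Rightarrow> ('a \<Rightarrow> real) \<Rightarrow> 'a measure" where
  "gen_sigma M Y = sigma (space M) {Y -` A \<inter> space M | A. A \<in> sets borel}"

definition markov_process :: "'a measure \<Rightarrow> (real \<Rightarrow> 'a \<Rightarrow> real) \<Rightarrow> bool" where
  "markov_process M X \<longleftrightarrow>
     (\<forall>s t A. 0 \<le> s \<longrightarrow> s \<le> t \<longrightarrow> A \<in> sets borel \<longrightarrow>
        (AE \<omega> in M. real_cond_exp M (nat_filtration M X s) (\<lambda>x. indicator A (X t x)) \<omega>
                    = real_cond_exp M (gen_sigma M (X s)) (\<lambda>x. indicator A (X t x)) \<omega>))"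

end

theory Submission
  imports Defs
begin

(* For a centered Gaussian process, V = G(h) - G(2h)/2 is uncorrelated with, hence independent
   of, G(2h). If G were Markov, conditioning G(3h) on the past up to 2h would be the same as
   conditioning on G(2h) alone; since V is determined by that past and independent of G(2h),
   G(3h) would be independent of V, and
     0 = 4 Cov(G(3h), V) = 3 f(h) - 3 f(2h) + f(3h)
   for every h > 0. Rescaling u = k w in the integral defining f turns this second difference
   into 4h/(a pi) times the integral of exp(-2c (w/h)^alpha) (1 - cos w)^2 (1 + 2 cos w) / w^2
   over (0, oo), a signed integrand with zero total mass and positive mass near pi/2; it is
   positive once h is so small that the weight drops by the factor e^-11 between pi/2 and
   2 pi/3. *)

section \<open>Independence from characteristic functions\<close>

lemma (in finite_measure) integrable_bounded:
  fixes f :: "'a \<Rightarrow> 'b::{banach, second_countable_topology}"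
  shows "f \<in> borel_measurable M \<Longrightarrow> (\<And>x. x \<in> space M \<Longrightarrow> norm (f x) \<le> B) \<Longrightarrow> integrable M f"
  by (rule integrable_const_bound[where B=B]) (auto intro!: AE_I2)

lemma (in prob_space) char_distr_eq:
  "random_variable borel Y \<Longrightarrow> char (distr M borel Y) \<theta> = (CLINT \<omega>|M. iexp (\<theta> * Y \<omega>))"
  by (simp add: char_def integral_distr)

lemma (in prob_space) integral_indicator_vimage:
  "random_variable borel Y \<Longrightarrow> D \<in> sets borel \<Longrightarrow>
    (\<integral>\<omega>. indicator D (Y \<omega>) \<partial>M) = prob (Y -` D \<inter> space M)"
proof -
  assume [measurable]: "random_variable borel Y" "D \<in> sets borel"
  have "(\<integral>\<omega>. indicator D (Y \<omega>) \<partial>M) = (\<integral>\<omega>. indicator (Y -` D \<inter> space M) \<omega> \<partial>M :: real)"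
    by (intro Bochner_Integration.integral_cong) (auto simp: indicator_def)
  moreover have "Y -` D \<inter> space M \<in> events"
    by measurable
  ultimately show ?thesis
    by simp
qed

lemma (in prob_space) prob_vimage_Int_eq_integral:
  assumes [measurable]: "random_variable borel X" "random_variable borel Y" "A \<in> sets borel" "B \<in> sets borel"
  shows "prob (X -` A \<inter> Y -` B \<inter> space M) = (\<integral>\<omega>. indicator A (X \<omega>) * indicator B (Y \<omega>) \<partial>M)"
proof -
  have "X -` A \<inter> Y -` B \<inter> space M \<in> events"
    by measurable
  moreover have "(\<integral>\<omega>. indicator A (X \<omega>) * indicator B (Y \<omega>) \<partial>M)
      = (\<integral>\<omega>. indicator (X -` A \<inter> Y -` B \<inter> space M) \<omega> \<partial>M :: real)"
    by (intro Bochner_Integration.integral_cong) (auto simp: indicator_def)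
  ultimately show ?thesis
    by simp
qed

lemma (in prob_space) indep_varI_vimage:
  assumes X: "random_variable S X" and Y: "random_variable T Y"
    and prod: "\<And>A B. A \<in> sets S \<Longrightarrow> B \<in> sets T \<Longrightarrow>
      prob (X -` A \<inter> Y -` B \<inter> space M) = prob (X -` A \<inter> space M) * prob (Y -` B \<inter> space M)"
  shows "indep_var S X T Y"
proof -
  have stable: "Int_stable {Z -` A \<inter> space M | A. A \<in> sets N}" for Z :: "'a \<Rightarrow> 'b" and N :: "'b measure"
  proof (safe intro!: Int_stableI)
    fix A B assume "A \<in> sets N" "B \<in> sets N"
    then show "\<exists>C. (Z -` A \<inter> space M) \<inter> (Z -` B \<inter> space M) = (Z -` C \<inter> space M) \<and> C \<in> sets N"
      by (intro exI[of _ "A \<inter> B"]) auto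
  qed
  have "indep_set {X -` A \<inter> space M | A. A \<in> sets S} {Y -` A \<inter> space M | A. A \<in> sets T}"
    using X Y by (auto simp: indep_sets2_eq measurable_sets Int_left_commute Int_assoc[symmetric] prod)
  then show ?thesis
    using X Y by (simp add: indep_var_eq indep_set_sigma_sets stable)
qed

lemma (in prob_space) prob_space_density_div_expectation:
  fixes Z :: "'a \<Rightarrow> real"
  assumes [measurable]: "Z \<in> borel_measurable M" and "integrable M Z"
    and Z_nonneg: "\<And>\<omega>. \<omega> \<in> space M \<Longrightarrow> 0 \<le> Z \<omega>" and "0 < expectation Z"
  shows "prob_space (density M (\<lambda>\<omega>. Z \<omega> / expectation Z))"
proof (rule prob_spaceI)
  let ?N = "density M (\<lambda>\<omega>. Z \<omega> / expectation Z)"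
  have "emeasure ?N (space M) = ennreal (\<integral>\<omega>. Z \<omega> / expectation Z \<partial>M)"
    using assms by (simp add: emeasure_density nn_integral_eq_integral flip: nn_integral_set_ennreal)
  also have "\<dots> = 1"
    using assms by simp
  finally show "emeasure ?N (space ?N) = 1"
    by simp
qed

(* Z / E[Z] is a probability density under which Y keeps its characteristic function, hence its
   law (Levy uniqueness). *)
lemma (in prob_space) integral_mult_indicator_eq_of_char_pos:
  fixes Y Z :: "'a \<Rightarrow> real"
  assumes [measurable]: "Y \<in> borel_measurable M" "Z \<in> borel_measurable M"
    and Z_nonneg: "\<And>\<omega>. \<omega> \<in> space M \<Longrightarrow> 0 \<le> Z \<omega>" and Z_le: "\<And>\<omega>. \<omega> \<in> space M \<Longrightarrow> Z \<omega> \<le> B"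
    and k: "0 < expectation Z"
    and tilted_char: "\<And>\<theta>. (CLINT \<omega>|M. Z \<omega> *\<^sub>R iexp (\<theta> * Y \<omega>)) = expectation Z *\<^sub>R char (distr M borel Y) \<theta>"
    and [measurable]: "D \<in> sets borel"
  shows "(\<integral>\<omega>. Z \<omega> * indicator D (Y \<omega>) \<partial>M) = expectation Z * prob (Y -` D \<inter> space M)"
proof -
  define k where "k = expectation Z"
  define N where "N = density M (\<lambda>\<omega>. Z \<omega> / k)"
  have g_nonneg: "AE \<omega> in M. 0 \<le> Z \<omega> / k"
    using Z_nonneg k by (auto simp: k_def)
  interpret N: prob_space N
    unfolding N_def k_def using Z_nonneg k Z_le
    by (intro prob_space_density_div_expectation integrable_bounded[where B=B]) auto
  have [simp]: "sets N = sets M" "space N = space M"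
    by (simp_all add: N_def)
  have [measurable]: "Y \<in> borel_measurable N"
    by (simp cong: measurable_cong_sets)
  have "char (distr N borel Y) = char (distr M borel Y)"
  proof
    fix \<theta>
    have "char (distr N borel Y) \<theta> = (CLINT \<omega>|N. iexp (\<theta> * Y \<omega>))"
      by (rule N.char_distr_eq) simp
    also have "\<dots> = (CLINT \<omega>|M. (Z \<omega> / k) *\<^sub>R iexp (\<theta> * Y \<omega>))"
      unfolding N_def using g_nonneg by (intro integral_density) auto
    also have "\<dots> = (CLINT \<omega>|M. Z \<omega> *\<^sub>R iexp (\<theta> * Y \<omega>)) /\<^sub>R k"
      by (simp add: divide_inverse_commute scaleR_scaleR[symmetric] del: scaleR_scaleR)
    also have "\<dots> = char (distr M borel Y) \<theta>"
      using k unfolding k_def tilted_char by simp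
    finally show "char (distr N borel Y) \<theta> = char (distr M borel Y) \<theta>" .
  qed
  then have "distr N borel Y = distr M borel Y"
    by (intro Levy_uniqueness) (auto intro: N.real_distribution_distr)
  then have "prob (Y -` D \<inter> space M) = N.prob (Y -` D \<inter> space M)"
    by (metis \<open>space N = space M\<close> \<open>D \<in> sets borel\<close> \<open>Y \<in> borel_measurable M\<close>
        \<open>Y \<in> borel_measurable N\<close> measure_distr)
  also have "\<dots> = (\<integral>\<omega>. indicator D (Y \<omega>) \<partial>N)"
    by (simp add: N.integral_indicator_vimage)
  also have "\<dots> = (\<integral>\<omega>. Z \<omega> * indicator D (Y \<omega>) \<partial>M) / k"
    using g_nonneg by (simp add: N_def integral_density)
  finally show ?thesis
    using k by (simp add: k_def field_simps)
qed

(* Shifting Z by a constant makes it a positive density without affecting the hypothesis. *)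
lemma (in prob_space) integral_mult_indicator_eq_of_char:
  fixes Y Z :: "'a \<Rightarrow> real"
  assumes [measurable]: "Y \<in> borel_measurable M" "Z \<in> borel_measurable M"
    and Z_bounded: "\<And>\<omega>. \<omega> \<in> space M \<Longrightarrow> \<bar>Z \<omega>\<bar> \<le> B"
    and uncorrelated: "\<And>\<theta>. (CLINT \<omega>|M. Z \<omega> *\<^sub>R iexp (\<theta> * Y \<omega>)) = expectation Z *\<^sub>R char (distr M borel Y) \<theta>"
    and [measurable]: "D \<in> sets borel"
  shows "(\<integral>\<omega>. Z \<omega> * indicator D (Y \<omega>) \<partial>M) = expectation Z * prob (Y -` D \<inter> space M)"
proof -
  define c where "c = B + 1"
  have Z_int: "integrable M Z"
    using Z_bounded by (intro integrable_bounded) auto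
  have iexp_int: "integrable M (\<lambda>\<omega>. iexp (\<theta> * Y \<omega>))" for \<theta>
    by (intro integrable_iexp) auto
  have Z_iexp_int: "integrable M (\<lambda>\<omega>. Z \<omega> *\<^sub>R iexp (\<theta> * Y \<omega>))" for \<theta>
    using Z_bounded by (intro integrable_bounded[where B=B]) (auto simp: norm_mult)
  have ind_int: "integrable M (\<lambda>\<omega>. indicator D (Y \<omega>) :: real)"
    by (intro integrable_bounded[where B=1]) (auto simp: indicator_def)
  have Z_ind_int: "integrable M (\<lambda>\<omega>. Z \<omega> * indicator D (Y \<omega>))"
    by (rule Bochner_Integration.integrable_bound[OF Z_int]) (auto simp: indicator_def intro!: AE_I2)
  have shifted_E: "expectation (\<lambda>\<omega>. Z \<omega> + c) = expectation Z + c"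
    using Z_int by (simp add: prob_space)
  have "1 \<le> expectation (\<lambda>\<omega>. Z \<omega> + c)"
    using Z_int by (intro integral_ge_const) (auto simp: c_def abs_le_iff dest!: Z_bounded intro!: AE_I2)
  then have "(\<integral>\<omega>. (Z \<omega> + c) * indicator D (Y \<omega>) \<partial>M) = expectation (\<lambda>\<omega>. Z \<omega> + c) * prob (Y -` D \<inter> space M)"
  proof (intro integral_mult_indicator_eq_of_char_pos[where B="2 * B + 1"])
    fix \<theta>
    have "(CLINT \<omega>|M. (Z \<omega> + c) *\<^sub>R iexp (\<theta> * Y \<omega>))
        = (CLINT \<omega>|M. Z \<omega> *\<^sub>R iexp (\<theta> * Y \<omega>)) + c *\<^sub>R (CLINT \<omega>|M. iexp (\<theta> * Y \<omega>))"
      using Z_iexp_int iexp_int by (simp add: scaleR_add_left)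
    also have "\<dots> = expectation (\<lambda>\<omega>. Z \<omega> + c) *\<^sub>R char (distr M borel Y) \<theta>"
      unfolding uncorrelated shifted_E by (simp add: char_distr_eq scaleR_add_left)
    finally show "(CLINT \<omega>|M. (Z \<omega> + c) *\<^sub>R iexp (\<theta> * Y \<omega>)) = expectation (\<lambda>\<omega>. Z \<omega> + c) *\<^sub>R char (distr M borel Y) \<theta>" .
  qed (auto simp: c_def abs_le_iff dest!: Z_bounded)
  moreover have "(\<integral>\<omega>. (Z \<omega> + c) * indicator D (Y \<omega>) \<partial>M)
      = (\<integral>\<omega>. Z \<omega> * indicator D (Y \<omega>) \<partial>M) + c * prob (Y -` D \<inter> space M)"
    using ind_int Z_ind_int by (simp add: distrib_right integral_indicator_vimage)
  ultimately show ?thesis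
    by (simp add: shifted_E distrib_right)
qed

lemma cos_scaleR_iexp: "cos x *\<^sub>R iexp y = (iexp (x + y) + iexp (- x + y)) / 2"
  by (simp add: scaleR_conv_of_real cos_of_real[symmetric] cos_exp_eq exp_add[symmetric]
      field_simps)

lemma sin_scaleR_iexp: "sin x *\<^sub>R iexp y = (iexp (x + y) - iexp (- x + y)) / (2 * \<i>)"
  by (simp add: scaleR_conv_of_real sin_of_real[symmetric] sin_exp_eq exp_add[symmetric]
      field_simps)

lemma (in prob_space) integral_trig_scaleR_iexp_of_char_factorizes:
  fixes Y1 Y2 :: "'a \<Rightarrow> real"
  assumes [measurable]: "random_variable borel Y1" "random_variable borel Y2"
    and factor: "\<And>a b. (CLINT \<omega>|M. iexp (a * Y1 \<omega> + b * Y2 \<omega>))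
      = char (distr M borel Y1) a * char (distr M borel Y2) b"
  shows "(CLINT \<omega>|M. cos (a * Y1 \<omega>) *\<^sub>R iexp (\<theta> * Y2 \<omega>))
      = expectation (\<lambda>\<omega>. cos (a * Y1 \<omega>)) *\<^sub>R char (distr M borel Y2) \<theta>"
    and "(CLINT \<omega>|M. sin (a * Y1 \<omega>) *\<^sub>R iexp (\<theta> * Y2 \<omega>))
      = expectation (\<lambda>\<omega>. sin (a * Y1 \<omega>)) *\<^sub>R char (distr M borel Y2) \<theta>"
proof -
  let ?\<phi>1 = "char (distr M borel Y1)" and ?\<phi>2 = "char (distr M borel Y2)"
  have iexp_int: "integrable M (\<lambda>\<omega>. iexp (a * Y1 \<omega> + b * Y2 \<omega>))" for a b
    by (intro integrable_iexp) auto
  have cos_char: "(CLINT \<omega>|M. cos (a * Y1 \<omega>) *\<^sub>R iexp (\<theta> * Y2 \<omega>)) = (?\<phi>1 a + ?\<phi>1 (- a)) / 2 * ?\<phi>2 \<theta>"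
    for \<theta>
    unfolding cos_scaleR_iexp
    using iexp_int[of a \<theta>] iexp_int[of "- a" \<theta>] factor[of a \<theta>] factor[of "- a" \<theta>]
    by (simp add: ring_distribs)
  have sin_char: "(CLINT \<omega>|M. sin (a * Y1 \<omega>) *\<^sub>R iexp (\<theta> * Y2 \<omega>)) = (?\<phi>1 a - ?\<phi>1 (- a)) / (2 * \<i>) * ?\<phi>2 \<theta>"
    for \<theta>
    unfolding sin_scaleR_iexp
    using iexp_int[of a \<theta>] iexp_int[of "- a" \<theta>] factor[of a \<theta>] factor[of "- a" \<theta>]
    by (simp add: ring_distribs diff_divide_distrib mult.assoc)
  have "?\<phi>2 0 = 1"
    by (simp add: real_distribution.char_zero)
  then have "complex_of_real (expectation (\<lambda>\<omega>. cos (a * Y1 \<omega>))) = (?\<phi>1 a + ?\<phi>1 (- a)) / 2"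
    "complex_of_real (expectation (\<lambda>\<omega>. sin (a * Y1 \<omega>))) = (?\<phi>1 a - ?\<phi>1 (- a)) / (2 * \<i>)"
    using cos_char[of 0] sin_char[of 0] by (simp_all add: scaleR_conv_of_real)
  then show "(CLINT \<omega>|M. cos (a * Y1 \<omega>) *\<^sub>R iexp (\<theta> * Y2 \<omega>))
      = expectation (\<lambda>\<omega>. cos (a * Y1 \<omega>)) *\<^sub>R ?\<phi>2 \<theta>"
    "(CLINT \<omega>|M. sin (a * Y1 \<omega>) *\<^sub>R iexp (\<theta> * Y2 \<omega>))
      = expectation (\<lambda>\<omega>. sin (a * Y1 \<omega>)) *\<^sub>R ?\<phi>2 \<theta>"
    by (subst cos_char sin_char, simp add: scaleR_conv_of_real)+
qed

lemma (in prob_space) integral_trig_mult_indicator_of_char_factorizes: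
  fixes Y1 Y2 :: "'a \<Rightarrow> real"
  assumes [measurable]: "random_variable borel Y1" "random_variable borel Y2"
    and factor: "\<And>a b. (CLINT \<omega>|M. iexp (a * Y1 \<omega> + b * Y2 \<omega>))
      = char (distr M borel Y1) a * char (distr M borel Y2) b"
    and [measurable]: "D \<in> sets borel"
  shows "(\<integral>\<omega>. cos (\<theta> * Y1 \<omega>) * indicator D (Y2 \<omega>) \<partial>M)
      = expectation (\<lambda>\<omega>. cos (\<theta> * Y1 \<omega>)) * prob (Y2 -` D \<inter> space M)"
    and "(\<integral>\<omega>. sin (\<theta> * Y1 \<omega>) * indicator D (Y2 \<omega>) \<partial>M)
      = expectation (\<lambda>\<omega>. sin (\<theta> * Y1 \<omega>)) * prob (Y2 -` D \<inter> space M)"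
proof -
  note trig_char = integral_trig_scaleR_iexp_of_char_factorizes[OF assms(1,2) factor]
  show "(\<integral>\<omega>. cos (\<theta> * Y1 \<omega>) * indicator D (Y2 \<omega>) \<partial>M)
      = expectation (\<lambda>\<omega>. cos (\<theta> * Y1 \<omega>)) * prob (Y2 -` D \<inter> space M)"
  proof (rule integral_mult_indicator_eq_of_char[where B=1])
    show "(CLINT \<omega>|M. cos (\<theta> * Y1 \<omega>) *\<^sub>R iexp (t * Y2 \<omega>))
        = expectation (\<lambda>\<omega>. cos (\<theta> * Y1 \<omega>)) *\<^sub>R char (distr M borel Y2) t" for t
      by (rule trig_char)
  qed auto
  show "(\<integral>\<omega>. sin (\<theta> * Y1 \<omega>) * indicator D (Y2 \<omega>) \<partial>M)
      = expectation (\<lambda>\<omega>. sin (\<theta> * Y1 \<omega>)) * prob (Y2 -` D \<inter> space M)"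
  proof (rule integral_mult_indicator_eq_of_char[where B=1])
    show "(CLINT \<omega>|M. sin (\<theta> * Y1 \<omega>) *\<^sub>R iexp (t * Y2 \<omega>))
        = expectation (\<lambda>\<omega>. sin (\<theta> * Y1 \<omega>)) *\<^sub>R char (distr M borel Y2) t" for t
      by (rule trig_char)
  qed auto
qed

lemma (in prob_space) integral_indicator_scaleR_iexp_of_char_factorizes:
  fixes Y1 Y2 :: "'a \<Rightarrow> real"
  assumes [measurable]: "random_variable borel Y1" "random_variable borel Y2"
    and factor: "\<And>a b. (CLINT \<omega>|M. iexp (a * Y1 \<omega> + b * Y2 \<omega>))
      = char (distr M borel Y1) a * char (distr M borel Y2) b"
    and [measurable]: "D \<in> sets borel"
  shows "(CLINT \<omega>|M. indicator D (Y2 \<omega>) *\<^sub>R iexp (\<theta> * Y1 \<omega>))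
    = prob (Y2 -` D \<inter> space M) *\<^sub>R char (distr M borel Y1) \<theta>"
proof (rule complex_eqI)
  let ?\<phi>1 = "char (distr M borel Y1)"
  have int: "integrable M (\<lambda>\<omega>. indicator D (Y2 \<omega>) *\<^sub>R iexp (\<theta> * Y1 \<omega>))"
    by (intro integrable_bounded[where B=1]) (auto simp: indicator_def)
  have int1: "integrable M (\<lambda>\<omega>. iexp (\<theta> * Y1 \<omega>))"
    by (intro integrable_iexp) auto
  have "Re (?\<phi>1 \<theta>) = expectation (\<lambda>\<omega>. cos (\<theta> * Y1 \<omega>))" "Im (?\<phi>1 \<theta>) = expectation (\<lambda>\<omega>. sin (\<theta> * Y1 \<omega>))"
    using integral_Re[OF int1] integral_Im[OF int1] by (simp_all add: char_distr_eq Re_exp Im_exp)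
  moreover have "Re (CLINT \<omega>|M. indicator D (Y2 \<omega>) *\<^sub>R iexp (\<theta> * Y1 \<omega>))
      = (\<integral>\<omega>. cos (\<theta> * Y1 \<omega>) * indicator D (Y2 \<omega>) \<partial>M)"
    "Im (CLINT \<omega>|M. indicator D (Y2 \<omega>) *\<^sub>R iexp (\<theta> * Y1 \<omega>))
      = (\<integral>\<omega>. sin (\<theta> * Y1 \<omega>) * indicator D (Y2 \<omega>) \<partial>M)"
    using integral_Re[OF int, symmetric] integral_Im[OF int, symmetric]
    by (simp_all add: Re_exp Im_exp mult.commute)
  ultimately show "Re (CLINT \<omega>|M. indicator D (Y2 \<omega>) *\<^sub>R iexp (\<theta> * Y1 \<omega>))
      = Re (prob (Y2 -` D \<inter> space M) *\<^sub>R ?\<phi>1 \<theta>)"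
    "Im (CLINT \<omega>|M. indicator D (Y2 \<omega>) *\<^sub>R iexp (\<theta> * Y1 \<omega>))
      = Im (prob (Y2 -` D \<inter> space M) *\<^sub>R ?\<phi>1 \<theta>)"
    using integral_trig_mult_indicator_of_char_factorizes[OF assms] by (simp_all add: mult_ac)
qed

(* Kac's theorem. Lacking a two-dimensional uniqueness theorem for characteristic functions, it
   is reduced to the one-dimensional one by tilting. *)
theorem (in prob_space) indep_var_if_char_factorizes:
  fixes Y1 Y2 :: "'a \<Rightarrow> real"
  assumes [measurable]: "random_variable borel Y1" "random_variable borel Y2"
    and factor: "\<And>a b. (CLINT \<omega>|M. iexp (a * Y1 \<omega> + b * Y2 \<omega>))
      = char (distr M borel Y1) a * char (distr M borel Y2) b"
  shows "indep_var borel Y1 borel Y2"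
proof (rule indep_varI_vimage)
  fix B D :: "real set"
  assume [measurable]: "B \<in> sets borel" "D \<in> sets borel"
  have "(\<integral>\<omega>. indicator D (Y2 \<omega>) * indicator B (Y1 \<omega>) \<partial>M)
      = expectation (\<lambda>\<omega>. indicator D (Y2 \<omega>)) * prob (Y1 -` B \<inter> space M)"
  proof (rule integral_mult_indicator_eq_of_char[where B=1])
    show "(CLINT \<omega>|M. indicator D (Y2 \<omega>) *\<^sub>R iexp (\<theta> * Y1 \<omega>))
        = expectation (\<lambda>\<omega>. indicator D (Y2 \<omega>)) *\<^sub>R char (distr M borel Y1) \<theta>" for \<theta>
      using integral_indicator_scaleR_iexp_of_char_factorizes[OF assms \<open>D \<in> sets borel\<close>]
      by (simp only: integral_indicator_vimage[OF \<open>random_variable borel Y2\<close> \<open>D \<in> sets borel\<close>])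
  qed auto
  then show "prob (Y1 -` B \<inter> Y2 -` D \<inter> space M) = prob (Y1 -` B \<inter> space M) * prob (Y2 -` D \<inter> space M)"
    by (simp add: prob_vimage_Int_eq_integral integral_indicator_vimage mult.commute)
qed simp_all

lemma (in prob_space) real_cond_exp_indicator_eq_prob:
  fixes V :: "'a \<Rightarrow> real"
  assumes H: "subalgebra M H" and [measurable]: "random_variable borel V" "B \<in> sets borel"
    and indep_H: "\<And>E. E \<in> sets H \<Longrightarrow> prob (E \<inter> (V -` B \<inter> space M)) = prob E * prob (V -` B \<inter> space M)"
  shows "AE \<omega> in M. real_cond_exp M H (\<lambda>\<omega>. indicator B (V \<omega>)) \<omega> = prob (V -` B \<inter> space M)"
proof -
  interpret H: finite_measure_subalgebra M H
    by unfold_locales (fact H)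
  have ind_int: "integrable M (\<lambda>\<omega>. indicator B (V \<omega>) :: real)"
    by (intro integrable_bounded[where B=1]) (auto simp: indicator_def)
  show ?thesis
  proof (rule H.real_cond_exp_charact)
    fix E
    assume E: "E \<in> sets H"
    then have [measurable]: "E \<in> events"
      using H by (auto simp: subalgebra_def)
    have "(\<integral>\<omega>\<in>E. indicator B (V \<omega>) \<partial>M) = (\<integral>\<omega>. indicator (E \<inter> (V -` B \<inter> space M)) \<omega> \<partial>M :: real)"
      unfolding set_lebesgue_integral_def using sets.sets_into_space[OF \<open>E \<in> events\<close>]
      by (intro Bochner_Integration.integral_cong) (auto simp: indicator_def)
    also have "\<dots> = prob (E \<inter> (V -` B \<inter> space M))"
      by simp
    also have "\<dots> = (\<integral>\<omega>\<in>E. prob (V -` B \<inter> space M) \<partial>M)"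
      using E \<open>E \<in> events\<close> by (simp add: indep_H set_integral_const)
    finally show "(\<integral>\<omega>\<in>E. indicator B (V \<omega>) \<partial>M) = (\<integral>\<omega>\<in>E. prob (V -` B \<inter> space M) \<partial>M)" .
  qed (simp_all add: ind_int)
qed

lemma (in prob_space) indep_var_of_cond_exp_eq:
  fixes X V :: "'a \<Rightarrow> real"
  assumes F: "subalgebra M F" and H: "subalgebra M H"
    and [measurable]: "random_variable borel X" "V \<in> borel_measurable F"
    and cond_exp_eq: "\<And>A. A \<in> sets borel \<Longrightarrow> AE \<omega> in M.
      real_cond_exp M F (\<lambda>\<omega>. indicator A (X \<omega>)) \<omega> = real_cond_exp M H (\<lambda>\<omega>. indicator A (X \<omega>)) \<omega>"
    and indep_H: "\<And>E B. E \<in> sets H \<Longrightarrow> B \<in> sets borel \<Longrightarrow>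
      prob (E \<inter> (V -` B \<inter> space M)) = prob E * prob (V -` B \<inter> space M)"
  shows "indep_var borel X borel V"
proof -
  interpret F: finite_measure_subalgebra M F
    by unfold_locales (fact F)
  interpret H: finite_measure_subalgebra M H
    by unfold_locales (fact H)
  have [measurable]: "random_variable borel V"
    using F by (rule measurable_from_subalg) measurable
  show ?thesis
  proof (rule indep_varI_vimage)
    fix A B :: "real set"
    assume [measurable]: "A \<in> sets borel" "B \<in> sets borel"
    define g where "g \<omega> = (indicator A (X \<omega>) :: real)" for \<omega>
    define f where "f \<omega> = (indicator B (V \<omega>) :: real)" for \<omega>
    define p where "p = prob (V -` B \<inter> space M)"
    have [measurable]: "g \<in> borel_measurable M"
      unfolding g_def by measurable
    have f_F [measurable]: "f \<in> borel_measurable F"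
      unfolding f_def by measurable
    have [measurable]: "f \<in> borel_measurable M"
      using F f_F by (rule measurable_from_subalg)
    have g_int: "integrable M g"
      by (auto intro!: integrable_bounded[where B=1] simp: g_def indicator_def)
    have fg_int: "integrable M (\<lambda>\<omega>. f \<omega> * g \<omega>)"
      by (auto intro!: integrable_bounded[where B=1] simp: g_def f_def indicator_def)
    have Hg_f_int: "integrable M (\<lambda>\<omega>. real_cond_exp M H g \<omega> * f \<omega>)"
      by (rule Bochner_Integration.integrable_bound[OF H.real_cond_exp_int(1)[OF g_int]])
        (auto simp: f_def indicator_def intro!: AE_I2)
    have cond_exp_f: "AE \<omega> in M. real_cond_exp M H f \<omega> = p"
      unfolding f_def[abs_def] p_def
      by (rule real_cond_exp_indicator_eq_prob[OF H]) (simp_all add: indep_H)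
    have "prob (X -` A \<inter> V -` B \<inter> space M) = (\<integral>\<omega>. f \<omega> * g \<omega> \<partial>M)"
      by (simp add: prob_vimage_Int_eq_integral f_def g_def mult.commute)
    also have "\<dots> = (\<integral>\<omega>. f \<omega> * real_cond_exp M F g \<omega> \<partial>M)"
      by (rule F.real_cond_exp_intg(2)[symmetric, OF fg_int]) auto
    also have "\<dots> = (\<integral>\<omega>. f \<omega> * real_cond_exp M H g \<omega> \<partial>M)"
      using cond_exp_eq[of A, folded g_def[abs_def]] by (intro integral_cong_AE) auto
    also have "\<dots> = (\<integral>\<omega>. real_cond_exp M H g \<omega> * real_cond_exp M H f \<omega> \<partial>M)"
      using H.real_cond_exp_intg(2)[OF Hg_f_int] by (simp add: mult.commute)
    also have "\<dots> = (\<integral>\<omega>. real_cond_exp M H g \<omega> * p \<partial>M)"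
      using cond_exp_f by (intro integral_cong_AE) auto
    also have "\<dots> = prob (X -` A \<inter> space M) * p"
      using g_int by (simp add: H.real_cond_exp_int(2) g_def integral_indicator_vimage)
    finally show "prob (X -` A \<inter> V -` B \<inter> space M) = prob (X -` A \<inter> space M) * prob (V -` B \<inter> space M)"
      by (simp add: p_def)
  qed simp_all
qed

section \<open>Positivity of the second difference of f\<close>

lemma set_integrable_mult_bounded:
  fixes e g :: "real \<Rightarrow> real"
  assumes g: "set_integrable lborel A g" and e_meas [measurable]: "e \<in> borel_measurable borel"
    and e: "\<And>x. \<bar>e x\<bar> \<le> B"
  shows "set_integrable lborel A (\<lambda>x. e x * g x)"
proof (rule set_integrable_bound[OF set_integrable_mult_right[OF g, of B]])
  have "(\<lambda>x. indicator A x * g x) \<in> borel_measurable lborel"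
    using g by (simp add: set_integrable_def)
  then have "(\<lambda>x. e x * (indicator A x * g x)) \<in> borel_measurable lborel"
    by measurable
  then show "set_borel_measurable lborel A (\<lambda>x. e x * g x)"
    by (simp add: set_borel_measurable_def mult.left_commute)
  show "AE x in lborel. x \<in> A \<longrightarrow> norm (e x * g x) \<le> norm (B * g x)"
  proof (intro AE_I2 impI)
    fix x
    have "\<bar>e x\<bar> \<le> \<bar>B\<bar>"
      using e[of x] by linarith
    then show "norm (e x * g x) \<le> norm (B * g x)"
      by (simp add: abs_mult mult_right_mono)
  qed
qed

lemma indicator_Ioi_scale: "0 < k \<Longrightarrow> indicator {0<..} (k * x) = (indicator {0<..} x :: real)"
  for k x :: real
  by (auto simp: indicator_def zero_less_mult_iff)

lemma set_integrable_Ioi_scale_iff: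
  fixes g :: "real \<Rightarrow> real"
  assumes "0 < k"
  shows "set_integrable lborel {0<..} (\<lambda>w. g (k * w)) \<longleftrightarrow> set_integrable lborel {0<..} g"
  using lborel_integrable_real_affine_iff[of k "\<lambda>u. indicator {0<..} u *\<^sub>R g u" 0] assms
  by (simp add: set_integrable_def indicator_Ioi_scale)

lemma set_integral_Ioi_scale:
  fixes g :: "real \<Rightarrow> real"
  assumes "0 < k"
  shows "(LBINT u:{0<..}. g u) = k * (LBINT w:{0<..}. g (k * w))"
  using lborel_integral_real_affine[of k "\<lambda>u. indicator {0<..} u *\<^sub>R g u" 0] assms
  by (simp add: set_lebesgue_integral_def indicator_Ioi_scale)

lemma set_integrable_inverse_1_plus_square:
  "set_integrable lborel {0<..} (\<lambda>x::real. 1 / (1 + x\<^sup>2))"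
  using integrable_I0i_1_div_plus_square
  unfolding interval_lebesgue_integrable_def einterval_def
  by (simp add: zero_ereal_def greaterThan_def)

lemma set_integral_inverse_1_plus_square: "(LBINT x:{0<..}. 1 / (1 + x\<^sup>2)) = pi / 2"
  using LBINT_I0i_1_div_plus_square
    interval_integral_to_infinity_eq[where a=0 and M=lborel and f="\<lambda>x. 1 / (1 + x\<^sup>2)"]
  by (simp add: zero_ereal_def)

lemma set_integral_Ioi_indicator_Icc:
  fixes a b C :: real
  assumes "0 < a"
  shows "set_integrable lborel {0<..} (\<lambda>w. indicator {a..b} w * C)"
    and "a \<le> b \<Longrightarrow> (LBINT w:{0<..}. indicator {a..b} w * C) = C * (b - a)"
proof -
  have Ioi: "(\<lambda>w. indicator {0<..} w *\<^sub>R (indicator {a..b} w * C)) = (\<lambda>w::real. indicator {a..b} w * C)"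
    using assms by (auto simp: indicator_def fun_eq_iff)
  have "integrable lborel (\<lambda>w::real. indicator {a..b} w * C)"
    by (intro integrable_mult_left integrable_real_indicator) (auto simp: emeasure_lborel_Icc_eq)
  then show "set_integrable lborel {0<..} (\<lambda>w. indicator {a..b} w * C)"
    unfolding set_integrable_def Ioi .
  have "(LBINT w:{0<..}. indicator {a..b} w * C) = measure lborel {a..b} * C"
    unfolding set_lebesgue_integral_def Ioi by simp
  then show "(LBINT w:{0<..}. indicator {a..b} w * C) = C * (b - a)" if "a \<le> b"
    using that by simp
qed

(* Up to the factor 2/pi the Fejer kernel of the real line: the integrand of f without damping. *)
definition fejer_kernel :: "real \<Rightarrow> real" where
  "fejer_kernel u = (sin (u / 2))\<^sup>2 / u\<^sup>2"

lemma fejer_kernel_nonneg: "0 \<le> fejer_kernel u"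
  by (simp add: fejer_kernel_def)

lemma fejer_kernel_measurable [measurable]: "fejer_kernel \<in> borel_measurable borel"
  unfolding fejer_kernel_def by measurable

lemma fejer_kernel_eq_cos: "fejer_kernel u = (1 - cos u) / (2 * u\<^sup>2)"
  using cos_double_sin[of "u / 2"] by (simp add: fejer_kernel_def)

lemma fejer_kernel_le: "fejer_kernel u \<le> 2 / (1 + u\<^sup>2)"
proof (cases "u = 0")
  case True
  then show ?thesis by (simp add: fejer_kernel_def)
next
  case False
  have "\<bar>sin (u / 2)\<bar>\<^sup>2 \<le> \<bar>u / 2\<bar>\<^sup>2"
    using abs_sin_x_le_abs_x[of "u / 2"] by (intro power_mono) auto
  then have "(sin (u / 2))\<^sup>2 / u\<^sup>2 \<le> 1 / 4"
    using False by (simp add: field_simps)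
  moreover have "(sin (u / 2))\<^sup>2 \<le> 1"
    by (simp add: abs_square_le_1)
  moreover have "fejer_kernel u * (1 + u\<^sup>2) = (sin (u / 2))\<^sup>2 / u\<^sup>2 + (sin (u / 2))\<^sup>2"
    using False by (simp add: fejer_kernel_def field_simps)
  ultimately have "fejer_kernel u * (1 + u\<^sup>2) \<le> 2"
    by linarith
  then show ?thesis
    by (simp add: field_simps add_pos_nonneg)
qed

lemma set_integrable_fejer_kernel: "set_integrable lborel {0<..} fejer_kernel"
proof (rule set_integrable_bound[where f="\<lambda>x. 2 * (1 / (1 + x\<^sup>2)) :: real"])
  show "set_integrable lborel {0<..} (\<lambda>x. (2::real) * (1 / (1 + x\<^sup>2)))"
    using set_integrable_mult_right[OF set_integrable_inverse_1_plus_square] by simp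
  show "AE x in lborel. x \<in> {0<..} \<longrightarrow> norm (fejer_kernel x) \<le> norm ((2::real) * (1 / (1 + x\<^sup>2)))"
    using fejer_kernel_le fejer_kernel_nonneg by (auto simp: add_pos_nonneg)
qed (simp add: set_borel_measurable_def)

lemma set_integrable_fejer_kernel_scale: "0 < k \<Longrightarrow> set_integrable lborel {0<..} (\<lambda>w. fejer_kernel (k * w))"
  using set_integrable_Ioi_scale_iff set_integrable_fejer_kernel by blast

definition fejer_combination :: "real \<Rightarrow> real" where
  "fejer_combination w = (1 - cos w)\<^sup>2 * (1 + 2 * cos w) / w\<^sup>2"

lemma fejer_kernel_combination:
  assumes "w \<noteq> 0"
  shows "3 * fejer_kernel w - 12 * fejer_kernel (2 * w) + 9 * fejer_kernel (3 * w) = - fejer_combination w"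
  using assms unfolding fejer_kernel_eq_cos fejer_combination_def cos_double_cos cos_treble_cos
  by (simp add: field_simps power2_eq_square power3_eq_cube)

lemma fejer_combination_eq_kernels:
  assumes "w \<noteq> 0"
  shows "fejer_combination w = 12 * fejer_kernel (2 * w) - 3 * fejer_kernel w - 9 * fejer_kernel (3 * w)"
  using fejer_kernel_combination[OF assms] by linarith

lemma set_integrable_fejer_combination: "set_integrable lborel {0<..} fejer_combination"
proof -
  have "set_integrable lborel {0<..}
      (\<lambda>w. 12 * fejer_kernel (2 * w) - 3 * fejer_kernel w - 9 * fejer_kernel (3 * w))"
    by (intro set_integral_diff(1) set_integrable_mult_right set_integrable_fejer_kernel
        set_integrable_fejer_kernel_scale) auto
  then show ?thesis
    by (subst set_integrable_cong[OF refl refl]) (auto simp: fejer_combination_eq_kernels)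
qed

lemma set_integral_fejer_combination: "(LBINT w:{0<..}. fejer_combination w) = 0"
proof -
  let ?S = "\<lambda>k. LBINT w:{0<..}. fejer_kernel (k * w)"
  have scale: "?S k = ?S 1 / k" if "0 < k" for k
    using set_integral_Ioi_scale[OF that, of fejer_kernel] that by simp
  have "(LBINT w:{0<..}. fejer_combination w) =
      (LBINT w:{0<..}. 12 * fejer_kernel (2 * w) - 3 * fejer_kernel w - 9 * fejer_kernel (3 * w))"
    by (intro set_lebesgue_integral_cong) (auto simp: fejer_combination_eq_kernels)
  also have "\<dots> = 12 * ?S 2 - 3 * ?S 1 - 9 * ?S 3"
    using set_integrable_fejer_kernel set_integrable_fejer_kernel_scale[of 2]
      set_integrable_fejer_kernel_scale[of 3]
    by (simp add: set_integral_diff set_integral_mult_right)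
  also have "\<dots> = 0"
    using scale[of 2] scale[of 3] by simp
  finally show ?thesis .
qed

lemma fejer_combination_nonneg:
  assumes "0 < w" "w \<le> 2 * pi / 3"
  shows "0 \<le> fejer_combination w"
proof -
  have "cos (2 * pi / 3) \<le> cos w"
    using assms by (intro cos_monotone_0_pi_le) auto
  then show ?thesis
    using cos_120 by (simp add: fejer_combination_def)
qed

lemma fejer_combination_ge:
  assumes "pi / 3 \<le> w" "w \<le> pi / 2"
  shows "1 / 16 \<le> fejer_combination w"
proof -
  have "0 < w" "w \<le> 2"
    using assms pi_gt_zero pi_less_4 by linarith+
  then have w: "0 < w" "w\<^sup>2 \<le> 4"
    using power_mono[of w 2 2] by simp_all
  have "cos w \<le> cos (pi / 3)" "0 \<le> cos w"
    using assms w by (auto intro!: cos_monotone_0_pi_le cos_ge_zero)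
  then have "(1 / 2)\<^sup>2 \<le> (1 - cos w)\<^sup>2" "1 \<le> 1 + 2 * cos w"
    using cos_60 by (auto intro!: power_mono)
  then have "1 / 4 * 1 \<le> (1 - cos w)\<^sup>2 * (1 + 2 * cos w)"
    by (intro mult_mono) (auto simp: power2_eq_square)
  then have "(1 / 4) / 4 \<le> (1 - cos w)\<^sup>2 * (1 + 2 * cos w) / w\<^sup>2"
    using w by (intro frac_le) auto
  then show ?thesis
    by (simp add: fejer_combination_def)
qed

lemma abs_fejer_combination_le:
  assumes "1 \<le> w"
  shows "\<bar>fejer_combination w\<bar> \<le> 24 / (1 + w\<^sup>2)"
proof -
  have "0 \<le> 1 - cos w" "1 - cos w \<le> 2" "\<bar>1 + 2 * cos w\<bar> \<le> 3"
    using cos_le_one[of w] cos_ge_minus_one[of w] by linarith+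
  moreover have "(1 - cos w)\<^sup>2 \<le> 2\<^sup>2"
    using calculation by (intro power_mono) auto
  ultimately have num: "\<bar>(1 - cos w)\<^sup>2 * (1 + 2 * cos w)\<bar> \<le> 2\<^sup>2 * 3"
    unfolding abs_mult by (intro mult_mono) auto
  have w: "1 \<le> w\<^sup>2"
    using assms by (simp add: one_le_power)
  have "\<bar>fejer_combination w\<bar> = \<bar>(1 - cos w)\<^sup>2 * (1 + 2 * cos w)\<bar> / w\<^sup>2"
    by (simp add: fejer_combination_def abs_divide)
  also have "\<dots> \<le> 12 / w\<^sup>2"
    using num by (intro divide_right_mono) auto
  also have "\<dots> = 24 / (2 * w\<^sup>2)"
    by simp
  also have "\<dots> \<le> 24 / (1 + w\<^sup>2)"
    using w by (intro divide_left_mono mult_pos_pos) auto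
  finally show ?thesis .
qed

lemma antimono_weight_mult_fejer_combination_ge:
  fixes e :: "real \<Rightarrow> real"
  assumes e_nonneg: "\<And>w. 0 \<le> e w" and e_antimono: "\<And>v w. 0 < v \<Longrightarrow> v \<le> w \<Longrightarrow> e w \<le> e v"
    and w_pos: "0 < w"
  shows "indicator {pi / 3..pi / 2} w * (e (pi / 2) / 16) - 24 * e (2 * pi / 3) * (1 / (1 + w\<^sup>2))
    \<le> e w * fejer_combination w"
proof -
  have tail: "0 \<le> 24 * e (2 * pi / 3) * (1 / (1 + w\<^sup>2))"
    using e_nonneg by (simp add: add_pos_nonneg)
  consider "w \<in> {pi / 3..pi / 2}" | "w \<notin> {pi / 3..pi / 2}" "w \<le> 2 * pi / 3" | "2 * pi / 3 < w"
    by linarith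
  then show ?thesis
  proof cases
    case 1
    have "e (pi / 2) \<le> e w"
      using 1 w_pos by (intro e_antimono) auto
    moreover have "1 / 16 \<le> fejer_combination w"
      using 1 by (intro fejer_combination_ge) auto
    ultimately have "e (pi / 2) * (1 / 16) \<le> e w * fejer_combination w"
      using e_nonneg by (intro mult_mono) auto
    with 1 tail show ?thesis
      by simp
  next
    case 2
    then have "0 \<le> e w * fejer_combination w"
      using w_pos e_nonneg fejer_combination_nonneg by simp
    with 2 tail show ?thesis
      by simp
  next
    case 3
    then have "1 \<le> w"
      using pi_ge_two by linarith
    have "e w \<le> e (2 * pi / 3)"
      using 3 pi_gt_zero by (intro e_antimono) auto
    then have "e w * \<bar>fejer_combination w\<bar> \<le> e (2 * pi / 3) * (24 / (1 + w\<^sup>2))"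
      using e_nonneg abs_fejer_combination_le[OF \<open>1 \<le> w\<close>] by (intro mult_mono) auto
    moreover have "e w * (- \<bar>fejer_combination w\<bar>) \<le> e w * fejer_combination w"
      using e_nonneg by (intro mult_left_mono) auto
    ultimately show ?thesis
      using 3 pi_gt_zero by simp
  qed
qed

lemma set_integral_antimono_weight_fejer_combination_ge:
  fixes e :: "real \<Rightarrow> real"
  assumes [measurable]: "e \<in> borel_measurable borel"
    and e_nonneg: "\<And>w. 0 \<le> e w" and e_le_1: "\<And>w. e w \<le> 1"
    and e_antimono: "\<And>v w. 0 < v \<Longrightarrow> v \<le> w \<Longrightarrow> e w \<le> e v"
  shows "e (pi / 2) * pi / 96 - 12 * pi * e (2 * pi / 3)
      \<le> (LBINT w:{0<..}. e w * fejer_combination w)"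
proof -
  define L where "L w = indicator {pi / 3..pi / 2} w * (e (pi / 2) / 16)
      - 24 * e (2 * pi / 3) * (1 / (1 + w\<^sup>2))" for w :: real
  have "0 < pi / 3"
    by simp
  note integrable_parts = set_integral_Ioi_indicator_Icc(1)[OF this]
    set_integrable_mult_right[OF set_integrable_inverse_1_plus_square]
  have "e (pi / 2) * pi / 96 - 12 * pi * e (2 * pi / 3)
      = e (pi / 2) / 16 * (pi / 2 - pi / 3) - 24 * e (2 * pi / 3) * (pi / 2)"
    by simp
  also have "\<dots> = (LBINT w:{0<..}. indicator {pi / 3..pi / 2} w * (e (pi / 2) / 16))
      - (LBINT w:{0<..}. 24 * e (2 * pi / 3) * (1 / (1 + w\<^sup>2)))"
    using \<open>0 < pi / 3\<close>
    by (simp only: set_integral_Ioi_indicator_Icc(2) set_integral_mult_right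
        set_integral_inverse_1_plus_square)
  also have "\<dots> = (LBINT w:{0<..}. L w)"
    unfolding L_def by (rule set_integral_diff(2)[OF integrable_parts, symmetric])
  also have "\<dots> \<le> (LBINT w:{0<..}. e w * fejer_combination w)"
    using e_nonneg e_le_1 unfolding L_def
    by (intro set_integral_mono set_integral_diff(1)[OF integrable_parts]
        set_integrable_mult_bounded[OF set_integrable_fejer_combination]
        antimono_weight_mult_fejer_combination_ge[OF e_nonneg e_antimono]) auto
  finally show ?thesis .
qed

definition damping :: "real \<Rightarrow> real \<Rightarrow> real \<Rightarrow> real \<Rightarrow> real" where
  "damping \<alpha> c h w = exp (- 2 * c * (w / h) powr \<alpha>)"

lemma damping_pos: "0 < damping \<alpha> c h w"
  by (simp add: damping_def)

lemma damping_le_1: "0 \<le> c \<Longrightarrow> damping \<alpha> c h w \<le> 1"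
  by (simp add: damping_def)

lemma damping_measurable [measurable]: "damping \<alpha> c h \<in> borel_measurable borel"
  unfolding damping_def by measurable

lemma damping_antimono:
  assumes "0 \<le> \<alpha>" "0 \<le> c" "0 < h" "0 \<le> v" "v \<le> w"
  shows "damping \<alpha> c h w \<le> damping \<alpha> c h v"
proof -
  have "(v / h) powr \<alpha> \<le> (w / h) powr \<alpha>"
    using assms by (intro powr_mono2 divide_right_mono) auto
  then show ?thesis
    using assms(2) by (simp add: damping_def mult_left_mono)
qed

lemma damping_ratio:
  assumes "0 < \<alpha>" "0 < c" "0 \<le> v" "v < w" "0 < L"
  shows "\<exists>h>0. damping \<alpha> c h w = exp (- L) * damping \<alpha> c h v"
proof -
  define h where "h = (2 * c * (w powr \<alpha> - v powr \<alpha>) / L) powr (1 / \<alpha>)"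
  have D: "0 < w powr \<alpha> - v powr \<alpha>"
    using assms by (simp add: powr_less_mono2)
  then have "h powr \<alpha> = 2 * c * (w powr \<alpha> - v powr \<alpha>) / L"
    using assms by (simp add: h_def powr_powr)
  moreover have "0 < h"
    using assms D by (simp add: h_def)
  ultimately have "- 2 * c * (w / h) powr \<alpha> = - L + - 2 * c * (v / h) powr \<alpha>"
    using assms D by (simp add: powr_divide field_simps)
  then have "damping \<alpha> c h w = exp (- L) * damping \<alpha> c h v"
    unfolding damping_def by (simp only: exp_add)
  with \<open>0 < h\<close> show ?thesis
    by blast
qed

definition fac_integral :: "real \<Rightarrow> real \<Rightarrow> real \<Rightarrow> real" where
  "fac_integral \<alpha> c s =
     (LBINT u:{0<..}. (sin (u / 2))\<^sup>2 / u\<^sup>2 * (1 - exp (- 2 * c * (u / s) powr \<alpha>)))"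

lemma fac_eq_fac_integral: "0 < s \<Longrightarrow> fac \<alpha> c a s = 4 * s / (a * pi) * fac_integral \<alpha> c s"
  unfolding fac_def fac_integral_def by simp

lemma fac_integral_scale:
  assumes "0 < k" "0 < h"
  shows "fac_integral \<alpha> c (k * h) = k * (LBINT w:{0<..}. fejer_kernel (k * w) * (1 - damping \<alpha> c h w))"
proof -
  have "fac_integral \<alpha> c (k * h) = k * (LBINT w:{0<..}.
      (sin (k * w / 2))\<^sup>2 / (k * w)\<^sup>2 * (1 - exp (- 2 * c * (k * w / (k * h)) powr \<alpha>)))"
    unfolding fac_integral_def by (rule set_integral_Ioi_scale[OF assms(1)])
  then show ?thesis
    using assms by (simp add: fejer_kernel_def damping_def)
qed

lemma fac_integral_second_difference:
  assumes "0 \<le> c" "0 < h"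
  shows "3 * fac_integral \<alpha> c h - 6 * fac_integral \<alpha> c (2 * h) + 3 * fac_integral \<alpha> c (3 * h)
       = (LBINT w:{0<..}. damping \<alpha> c h w * fejer_combination w)"
proof -
  let ?E = "damping \<alpha> c h" and ?P = fejer_combination
  have E: "\<bar>1 - ?E w\<bar> \<le> 1" "\<bar>?E w\<bar> \<le> 1" for w
    using damping_pos[of \<alpha> c h w] damping_le_1[OF assms(1)] by auto
  have int: "set_integrable lborel {0<..} (\<lambda>w. (1 - ?E w) * fejer_kernel (k * w))" if "0 < k" for k
    using set_integrable_fejer_kernel_scale[OF that] by (rule set_integrable_mult_bounded) (use E in auto)
  have int1: "set_integrable lborel {0<..} (\<lambda>w. (1 - ?E w) * fejer_kernel w)"
    using int[of 1] by simp
  have "3 * fac_integral \<alpha> c h - 6 * fac_integral \<alpha> c (2 * h) + 3 * fac_integral \<alpha> c (3 * h)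
      = 3 * (LBINT w:{0<..}. (1 - ?E w) * fejer_kernel w)
        - 12 * (LBINT w:{0<..}. (1 - ?E w) * fejer_kernel (2 * w))
        + 9 * (LBINT w:{0<..}. (1 - ?E w) * fejer_kernel (3 * w))"
    using fac_integral_scale[of 1 h] fac_integral_scale[of 2 h] fac_integral_scale[of 3 h] assms
    by (simp add: mult.commute)
  also have "\<dots> = (LBINT w:{0<..}. 3 * ((1 - ?E w) * fejer_kernel w)
      - 12 * ((1 - ?E w) * fejer_kernel (2 * w)) + 9 * ((1 - ?E w) * fejer_kernel (3 * w)))"
    using int1 int[of 2] int[of 3] by (simp add: set_integral_add set_integral_diff)
  also have "\<dots> = (LBINT w:{0<..}. ?E w * ?P w - ?P w)"
    by (intro set_lebesgue_integral_cong) (auto simp: fejer_combination_eq_kernels algebra_simps)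
  also have "\<dots> = (LBINT w:{0<..}. ?E w * ?P w) - (LBINT w:{0<..}. ?P w)"
    using set_integrable_fejer_combination
    by (intro set_integral_diff(2) set_integrable_mult_bounded[OF _ _ E(2)]) auto
  finally show ?thesis
    by (simp add: set_integral_fejer_combination)
qed

lemma exp_11_gt_1152: "1152 < exp (11::real)"
proof -
  have "(2::real) ^ 11 \<le> exp 1 ^ 11"
    using exp_ge_add_one_self[of 1] by (intro power_mono) auto
  also have "exp (1::real) ^ 11 = exp 11"
    by (simp flip: exp_of_nat_mult)
  finally show ?thesis
    by simp
qed

lemma fac_second_difference_pos:
  assumes "0 < \<alpha>" "0 < c" "0 < a"
  shows "\<exists>h>0. 0 < 3 * fac \<alpha> c a h - 3 * fac \<alpha> c a (2 * h) + fac \<alpha> c a (3 * h)"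
proof -
  obtain h where h: "0 < h"
    and ratio: "damping \<alpha> c h (2 * pi / 3) = exp (- 11) * damping \<alpha> c h (pi / 2)"
    using damping_ratio[of \<alpha> c "pi / 2" "2 * pi / 3" 11] assms pi_gt_zero by auto
  let ?E = "damping \<alpha> c h"
  (* 1152 = 12 * 96 is the ratio of the two coefficients in the lower bound below. *)
  have "exp (- 11) < 1 / (1152::real)"
    using exp_11_gt_1152 by (simp add: exp_minus field_simps)
  then have "1152 * ?E (2 * pi / 3) < ?E (pi / 2)"
    unfolding ratio using damping_pos[of \<alpha> c h "pi / 2"] by (simp add: field_simps)
  then have "0 < ?E (pi / 2) * pi / 96 - 12 * pi * ?E (2 * pi / 3)"
    using pi_gt_zero by (simp add: field_simps)
  also have "\<dots> \<le> (LBINT w:{0<..}. ?E w * fejer_combination w)"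
    using assms h
    by (intro set_integral_antimono_weight_fejer_combination_ge)
      (auto intro!: damping_antimono less_imp_le[OF damping_pos] damping_le_1)
  also have "\<dots> = 3 * fac_integral \<alpha> c h - 6 * fac_integral \<alpha> c (2 * h) + 3 * fac_integral \<alpha> c (3 * h)"
    using assms h by (simp add: fac_integral_second_difference)
  finally have "0 < 4 * h / (a * pi) *
      (3 * fac_integral \<alpha> c h - 6 * fac_integral \<alpha> c (2 * h) + 3 * fac_integral \<alpha> c (3 * h))"
    using assms h by simp
  also have "\<dots> = 3 * fac \<alpha> c a h - 3 * fac \<alpha> c a (2 * h) + fac \<alpha> c a (3 * h)"
    using h assms(3) by (simp add: fac_eq_fac_integral field_simps)
  finally show ?thesis
    using h by blast
qed

section \<open>Markov property of the Gaussian process\<close>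

lemma gen_sigma_eq_vimage_algebra: "gen_sigma M Y = vimage_algebra (space M) Y borel"
  unfolding gen_sigma_def vimage_algebra_def ..

lemma sets_gen_sigma: "sets (gen_sigma M Y) = {Y -` A \<inter> space M | A. A \<in> sets borel}"
  unfolding gen_sigma_eq_vimage_algebra by (rule sets_vimage_algebra2) auto

lemma space_gen_sigma [simp]: "space (gen_sigma M Y) = space M"
  by (simp add: gen_sigma_eq_vimage_algebra)

lemma subalgebra_gen_sigma: "Y \<in> borel_measurable M \<Longrightarrow> subalgebra M (gen_sigma M Y)"
  by (auto simp: subalgebra_def sets_gen_sigma measurable_sets)

lemma space_nat_filtration [simp]: "space (nat_filtration M X s) = space M"
  by (simp add: nat_filtration_def space_measure_of_conv)

lemma sets_nat_filtration:
  "sets (nat_filtration M X s) = sigma_sets (space M) (\<Union>r\<in>{0..s}. {X r -` A \<inter> space M | A. A \<in> sets borel})"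
  unfolding nat_filtration_def by (intro sets_measure_of) auto

lemma subalgebra_nat_filtration:
  assumes "\<And>r. 0 \<le> r \<Longrightarrow> r \<le> s \<Longrightarrow> X r \<in> borel_measurable M"
  shows "subalgebra M (nat_filtration M X s)"
  unfolding subalgebra_def sets_nat_filtration using assms
  by (auto intro!: sets.sigma_sets_subset simp: measurable_sets)

lemma measurable_nat_filtration:
  assumes "0 \<le> r" "r \<le> s"
  shows "X r \<in> borel_measurable (nat_filtration M X s)"
proof (rule measurableI)
  fix A :: "real set"
  assume "A \<in> sets borel"
  then show "X r -` A \<inter> space (nat_filtration M X s) \<in> sets (nat_filtration M X s)"
    using assms unfolding sets_nat_filtration by (intro sigma_sets.Basic UN_I[of r]) auto
qed simp

lemma (in prob_space) centered_gaussian_process_measurable: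
  "centered_gaussian_process M G K \<Longrightarrow> 0 \<le> t \<Longrightarrow> random_variable borel (G t)"
  by (simp add: centered_gaussian_process_def)

lemma (in prob_space) centered_gaussian_process_integral_iexp:
  assumes G: "centered_gaussian_process M G K" and I: "finite I" "I \<subseteq> {0..}"
  shows "(CLINT \<omega>|M. iexp (\<Sum>t\<in>I. w t * G t \<omega>)) = exp (- (\<Sum>s\<in>I. \<Sum>t\<in>I. w s * w t * K s t) / 2)"
proof -
  have "random_variable borel (\<lambda>\<omega>. \<Sum>t\<in>I. w t * G t \<omega>)"
    using I centered_gaussian_process_measurable[OF G] by (intro borel_measurable_sum) auto
  moreover have "char (distr M borel (\<lambda>\<omega>. \<Sum>t\<in>I. w t * G t \<omega>)) 1
      = exp (complex_of_real (- (1\<^sup>2 / 2) * (\<Sum>s\<in>I. \<Sum>t\<in>I. w s * w t * K s t)))"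
    using G I unfolding centered_gaussian_process_def by blast
  moreover have "- (1\<^sup>2 / 2) * (\<Sum>s\<in>I. \<Sum>t\<in>I. w s * w t * K s t) = - (\<Sum>s\<in>I. \<Sum>t\<in>I. w s * w t * K s t) / 2"
    by simp
  ultimately show ?thesis
    by (simp only: char_distr_eq mult_1 exp_of_real)
qed

(* The variance of p G(h) + q G(2h) + r G(3h) when Cov(G s, G t) = (f s + f t - f |s - t|) / 2
   and f 0 = 0. *)
definition three_point_variance :: "(real \<Rightarrow> real) \<Rightarrow> real \<Rightarrow> real \<Rightarrow> real \<Rightarrow> real \<Rightarrow> real" where
  "three_point_variance f h p q r = p\<^sup>2 * f h + q\<^sup>2 * f (2 * h) + r\<^sup>2 * f (3 * h) + p * q * f (2 * h)
     + p * r * (f h + f (3 * h) - f (2 * h)) + q * r * (f (2 * h) + f (3 * h) - f h)"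

lemma (in prob_space) Kac_integral_iexp_three_point:
  assumes G: "centered_gaussian_process M G (Kac \<alpha> c a)" and h: "0 < h"
  shows "(CLINT \<omega>|M. iexp (p * G h \<omega> + q * G (2 * h) \<omega> + r * G (3 * h) \<omega>))
    = exp (- three_point_variance (fac \<alpha> c a) h p q r / 2)"
proof -
  define w where "w t = (if t = h then p else if t = 2 * h then q else r)" for t
  have I: "finite {h, 2 * h, 3 * h}" "{h, 2 * h, 3 * h} \<subseteq> {0..}"
    using h by auto
  have "(\<Sum>t\<in>{h, 2 * h, 3 * h}. w t * G t \<omega>) = p * G h \<omega> + q * G (2 * h) \<omega> + r * G (3 * h) \<omega>" for \<omega>
    using h by (simp add: w_def)
  moreover have "(\<Sum>s\<in>{h, 2 * h, 3 * h}. \<Sum>t\<in>{h, 2 * h, 3 * h}. w s * w t * Kac \<alpha> c a s t)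
      = three_point_variance (fac \<alpha> c a) h p q r"
  proof -
    have "h \<noteq> 2 * h" "h \<noteq> 3 * h" "2 * h \<noteq> 3 * h"
      "\<bar>h - 2 * h\<bar> = h" "\<bar>h - 3 * h\<bar> = 2 * h" "\<bar>2 * h - 3 * h\<bar> = h"
      "\<bar>2 * h - h\<bar> = h" "\<bar>3 * h - h\<bar> = 2 * h" "\<bar>3 * h - 2 * h\<bar> = h" "\<bar>h\<bar> = h" "\<bar>h * 2\<bar> = h * 2"
      using h by auto
    moreover have "fac \<alpha> c a 0 = 0"
      by (simp add: fac_def)
    ultimately show ?thesis
      unfolding w_def Kac_def three_point_variance_def by (simp add: field_simps power2_eq_square)
  qed
  ultimately show ?thesis
    using centered_gaussian_process_integral_iexp[OF G I, of w] by simp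
qed

lemma (in prob_space) Kac_char_three_point:
  assumes G: "centered_gaussian_process M G (Kac \<alpha> c a)" and h: "0 < h"
  shows "char (distr M borel (\<lambda>\<omega>. p * G h \<omega> + q * G (2 * h) \<omega> + r * G (3 * h) \<omega>)) 1
    = exp (- three_point_variance (fac \<alpha> c a) h p q r / 2)"
proof -
  have [measurable]: "random_variable borel (G h)" "random_variable borel (G (2 * h))"
    "random_variable borel (G (3 * h))"
    using h centered_gaussian_process_measurable[OF G] by auto
  have "random_variable borel (\<lambda>\<omega>. p * G h \<omega> + q * G (2 * h) \<omega> + r * G (3 * h) \<omega>)"
    by measurable
  then show ?thesis
    by (simp only: char_distr_eq mult_1 Kac_integral_iexp_three_point[OF G h])
qed

lemma (in prob_space) Kac_indep_var_residual:
  assumes G: "centered_gaussian_process M G (Kac \<alpha> c a)" and h: "0 < h"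
  shows "indep_var borel (\<lambda>\<omega>. G h \<omega> - G (2 * h) \<omega> / 2) borel (G (2 * h))"
proof (rule indep_var_if_char_factorizes)
  let ?Q = "three_point_variance (fac \<alpha> c a) h"
  define V where "V \<omega> = G h \<omega> - G (2 * h) \<omega> / 2" for \<omega>
  have [measurable]: "random_variable borel (G h)" "random_variable borel (G (2 * h))"
    using h centered_gaussian_process_measurable[OF G] by auto
  show "random_variable borel (\<lambda>\<omega>. G h \<omega> - G (2 * h) \<omega> / 2)"
    by measurable
  show "random_variable borel (G (2 * h))"
    by measurable
  have [measurable]: "random_variable borel V"
    unfolding V_def by measurable
  fix x y
  have "x * V \<omega> + y * G (2 * h) \<omega> = x * G h \<omega> + (y - x / 2) * G (2 * h) \<omega> + 0 * G (3 * h) \<omega>" for \<omega>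
    by (simp add: V_def algebra_simps)
  then have "(CLINT \<omega>|M. iexp (x * V \<omega> + y * G (2 * h) \<omega>)) = exp (- ?Q x (y - x / 2) 0 / 2)"
    by (simp only: Kac_integral_iexp_three_point[OF G h])
  moreover have "x * V \<omega> = x * G h \<omega> + (- x / 2) * G (2 * h) \<omega> + 0 * G (3 * h) \<omega>" for \<omega>
    by (simp add: V_def algebra_simps)
  then have "char (distr M borel V) x = exp (- ?Q x (- x / 2) 0 / 2)"
    by (simp only: char_distr_eq[OF \<open>random_variable borel V\<close>] Kac_integral_iexp_three_point[OF G h])
  moreover have "char (distr M borel (G (2 * h))) y = exp (- ?Q 0 y 0 / 2)"
    using Kac_integral_iexp_three_point[OF G h, of 0 y 0] by (simp add: char_distr_eq)
  moreover have "- ?Q x (y - x / 2) 0 / 2 = - ?Q x (- x / 2) 0 / 2 + - ?Q 0 y 0 / 2"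
    by (simp add: three_point_variance_def power2_eq_square field_simps)
  ultimately show "(CLINT \<omega>|M. iexp (x * (G h \<omega> - G (2 * h) \<omega> / 2) + y * G (2 * h) \<omega>))
      = char (distr M borel (\<lambda>\<omega>. G h \<omega> - G (2 * h) \<omega> / 2)) x * char (distr M borel (G (2 * h))) y"
    unfolding V_def[symmetric] by (simp only: exp_add of_real_mult)
qed

lemma (in prob_space) Kac_indep_var_residual_if_markov:
  assumes G: "centered_gaussian_process M G (Kac \<alpha> c a)" and h: "0 < h"
    and markov: "markov_process M G"
  shows "indep_var borel (G (3 * h)) borel (\<lambda>\<omega>. G h \<omega> - G (2 * h) \<omega> / 2)"
proof (rule indep_var_of_cond_exp_eq[where F="nat_filtration M G (2 * h)" and H="gen_sigma M (G (2 * h))"])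
  have G_rv [measurable]: "random_variable borel (G t)" if "0 \<le> t" for t
    using centered_gaussian_process_measurable[OF G that] .
  show "random_variable borel (G (3 * h))"
    using h by (auto intro: G_rv)
  show "subalgebra M (nat_filtration M G (2 * h))"
    by (rule subalgebra_nat_filtration) (use G_rv in auto)
  show "subalgebra M (gen_sigma M (G (2 * h)))"
    using h by (intro subalgebra_gen_sigma G_rv) auto
  have [measurable]: "G h \<in> borel_measurable (nat_filtration M G (2 * h))"
    "G (2 * h) \<in> borel_measurable (nat_filtration M G (2 * h))"
    using h by (auto intro: measurable_nat_filtration)
  show "(\<lambda>\<omega>. G h \<omega> - G (2 * h) \<omega> / 2) \<in> borel_measurable (nat_filtration M G (2 * h))"
    by measurable
  show "AE \<omega> in M. real_cond_exp M (nat_filtration M G (2 * h)) (\<lambda>\<omega>. indicator A (G (3 * h) \<omega>)) \<omega>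
      = real_cond_exp M (gen_sigma M (G (2 * h))) (\<lambda>\<omega>. indicator A (G (3 * h) \<omega>)) \<omega>"
    if "A \<in> sets borel" for A
    using markov h that unfolding markov_process_def by auto
  show "prob (E \<inter> ((\<lambda>\<omega>. G h \<omega> - G (2 * h) \<omega> / 2) -` B \<inter> space M))
      = prob E * prob ((\<lambda>\<omega>. G h \<omega> - G (2 * h) \<omega> / 2) -` B \<inter> space M)"
    if E: "E \<in> sets (gen_sigma M (G (2 * h)))" and B: "B \<in> sets borel" for E B
  proof -
    obtain D where D: "D \<in> sets borel" "E = G (2 * h) -` D \<inter> space M"
      using E by (auto simp: sets_gen_sigma)
    have "prob (E \<inter> ((\<lambda>\<omega>. G h \<omega> - G (2 * h) \<omega> / 2) -` B \<inter> space M))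
        = prob ((\<lambda>\<omega>. (G h \<omega> - G (2 * h) \<omega> / 2, G (2 * h) \<omega>)) -` (B \<times> D) \<inter> space M)"
      using D by (intro arg_cong[where f=prob]) auto
    also have "\<dots> = prob ((\<lambda>\<omega>. G h \<omega> - G (2 * h) \<omega> / 2) -` B \<inter> space M) * prob E"
      using D B by (simp add: indep_varD[OF Kac_indep_var_residual[OF G h]])
    finally show ?thesis
      by simp
  qed
qed

lemma (in prob_space) fac_second_difference_eq_0_if_markov:
  assumes G: "centered_gaussian_process M G (Kac \<alpha> c a)" and h: "0 < h"
    and markov: "markov_process M G"
  shows "3 * fac \<alpha> c a h - 3 * fac \<alpha> c a (2 * h) + fac \<alpha> c a (3 * h) = 0"
proof -
  let ?Q = "three_point_variance (fac \<alpha> c a) h"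
  define V where "V \<omega> = G h \<omega> - G (2 * h) \<omega> / 2" for \<omega>
  have "char (distr M borel (\<lambda>\<omega>. G (3 * h) \<omega> + V \<omega>)) 1
      = char (distr M borel (G (3 * h))) 1 * char (distr M borel V) 1"
    using char_distr_add[OF Kac_indep_var_residual_if_markov[OF G h markov]] by (simp add: V_def[abs_def])
  moreover have "(\<lambda>\<omega>. G (3 * h) \<omega> + V \<omega>) = (\<lambda>\<omega>. 1 * G h \<omega> + (- 1 / 2) * G (2 * h) \<omega> + 1 * G (3 * h) \<omega>)"
    by (simp add: V_def fun_eq_iff)
  then have "char (distr M borel (\<lambda>\<omega>. G (3 * h) \<omega> + V \<omega>)) 1 = exp (- ?Q 1 (- 1 / 2) 1 / 2)"
    by (simp only: Kac_char_three_point[OF G h])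
  moreover have "char (distr M borel (G (3 * h))) 1 = exp (- ?Q 0 0 1 / 2)"
    using Kac_char_three_point[OF G h, of 0 0 1] by simp
  moreover have "V = (\<lambda>\<omega>. 1 * G h \<omega> + (- 1 / 2) * G (2 * h) \<omega> + 0 * G (3 * h) \<omega>)"
    by (simp add: V_def fun_eq_iff)
  then have "char (distr M borel V) 1 = exp (- ?Q 1 (- 1 / 2) 0 / 2)"
    by (simp only: Kac_char_three_point[OF G h])
  ultimately have "exp (- ?Q 1 (- 1 / 2) 1 / 2) = exp (- ?Q 0 0 1 / 2) * exp (- ?Q 1 (- 1 / 2) 0 / 2)"
    by (simp only: of_real_mult[symmetric] of_real_eq_iff)
  then have "- ?Q 1 (- 1 / 2) 1 / 2 = - ?Q 0 0 1 / 2 + - ?Q 1 (- 1 / 2) 0 / 2"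
    by (simp only: exp_add[symmetric] exp_inj_iff)
  then show ?thesis
    by (simp add: three_point_variance_def field_simps)
qed

(* The hypothesis alpha <= 2 is what makes Kac a covariance, i.e. lets such a process exist;
   the argument below does not use it. *)
theorem proposition3p10:
  fixes \<alpha> c a :: real and M :: "'a measure" and G :: "real \<Rightarrow> 'a \<Rightarrow> real"
  assumes "0 < \<alpha>" and "\<alpha> \<le> 2" and "0 < c" and "0 < a"
    and "prob_space M"
    and "centered_gaussian_process M G (Kac \<alpha> c a)"
  shows "\<not> markov_process M G"
proof
  assume markov: "markov_process M G"
  interpret prob_space M
    by fact
  obtain h where "0 < h" and "0 < 3 * fac \<alpha> c a h - 3 * fac \<alpha> c a (2 * h) + fac \<alpha> c a (3 * h)"
    using fac_second_difference_pos[OF \<open>0 < \<alpha>\<close> \<open>0 < c\<close> \<open>0 < a\<close>] by blast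
  moreover have "3 * fac \<alpha> c a h - 3 * fac \<alpha> c a (2 * h) + fac \<alpha> c a (3 * h) = 0"
    using fac_second_difference_eq_0_if_markov[OF assms(6) \<open>0 < h\<close> markov] .
  ultimately show False
    by simp
qed

end
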